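(* If $G$ is a graph of order $n$, then $\operatorname{lb}_1(G)\leq\frac{n-1}{2}$, with equality if and only if $G$ is a conference graph.
   Context: All graphs are finite and simple. For a graph $G$ and a partition $\mathcal{P}$ of $V(G)$, the quotient trigraph $G/\mathcal{P}$ has vertex set $\mathcal{P}$; two distinct parts $U,W$ are joined by a black edge if every pair $\{u,w\}$ with $u\in U,w\in W$ is an edge of $G$, are non-adjacent if no such pair is an edge, and are joined by a red edge otherwise; the red degree of a part is the number of red edges incident to it. For $|V(G)|\geq 2$, $\operatorname{lb}_1(G)$ is the minimum, over all 2-element subsets $\{u,v\}\subseteq V(G)$, of the maximum red degree of $G/\mathcal{P}$, where $\mathcal{P}$ is the partition whose only non-singleton part is $\{u,v\}$; for $|V(G)|=1$, $\operatorname{lb}_1(G)\coloneqq 0$. A graph $G$ of order $n$ is strongly regular with parameters $(n,d,\lambda,\mu)$ if it is $d$-regular and any two distinct adjacent vertices have exactly $\lambda$ common neighbors while any two distinct non-adjacent vertices have exactly $\mu$ common neighbors. A conference graph is a strongly regular graph with parameters $(n,\frac{n-1}{2},\frac{n-5}{4},\frac{n-1}{4})$. *)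

theory Defs
  imports Complex_Main
begin

definition simple_graph :: "'a set \<Rightarrow> ('a \<Rightarrow> 'a \<Rightarrow> bool) \<Rightarrow> bool" where
  "simple_graph V E \<longleftrightarrow> finite V \<and> (\<forall>x y. E x y \<longrightarrow> x \<in> V \<and> y \<in> V)
     \<and> (\<forall>x y. E x y \<longrightarrow> E y x) \<and> (\<forall>x. \<not> E x x)"

definition nbhd :: "'a set \<Rightarrow> ('a \<Rightarrow> 'a \<Rightarrow> bool) \<Rightarrow> 'a \<Rightarrow> 'a set" where
  "nbhd V E v = {w \<in> V. E v w}"

text \<open>Red edge in the quotient trigraph between two distinct parts U, W:
  neither all pairs are edges (black) nor no pair is an edge (non-adjacent).\<close>
definition red_edge :: "('a \<Rightarrow> 'a \<Rightarrow> bool) \<Rightarrow> 'a set \<Rightarrow> 'a set \<Rightarrow> bool" where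
  "red_edge E U W \<longleftrightarrow> U \<noteq> W \<and> \<not> (\<forall>u\<in>U. \<forall>w\<in>W. E u w) \<and> \<not> (\<forall>u\<in>U. \<forall>w\<in>W. \<not> E u w)"

definition red_degree :: "('a \<Rightarrow> 'a \<Rightarrow> bool) \<Rightarrow> 'a set set \<Rightarrow> 'a set \<Rightarrow> nat" where
  "red_degree E P U = card {W \<in> P. red_edge E U W}"

definition max_red_degree :: "('a \<Rightarrow> 'a \<Rightarrow> bool) \<Rightarrow> 'a set set \<Rightarrow> nat" where
  "max_red_degree E P = Max (red_degree E P ` P)"

definition pair_partition :: "'a set \<Rightarrow> 'a \<Rightarrow> 'a \<Rightarrow> 'a set set" where
  "pair_partition V u v = insert {u, v} ((\<lambda>w. {w}) ` (V - {u, v}))"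

definition lb1 :: "'a set \<Rightarrow> ('a \<Rightarrow> 'a \<Rightarrow> bool) \<Rightarrow> nat" where
  "lb1 V E = (if card V = 1 then 0 else
     Min {max_red_degree E (pair_partition V u v) | u v. u \<in> V \<and> v \<in> V \<and> u \<noteq> v})"

text \<open>Strongly regular with parameters (n,d,lambda,mu); parameters are taken as reals so that
  conference-graph parameters like (n-5)/4 make sense for every n.\<close>
definition strongly_regular ::
  "'a set \<Rightarrow> ('a \<Rightarrow> 'a \<Rightarrow> bool) \<Rightarrow> real \<Rightarrow> real \<Rightarrow> real \<Rightarrow> real \<Rightarrow> bool" where
  "strongly_regular V E n d lam mu \<longleftrightarrow>
     real (card V) = n \<and>
     (\<forall>v\<in>V. real (card (nbhd V E v)) = d) \<and>
     (\<forall>u\<in>V. \<forall>v\<in>V. u \<noteq> v \<and> E u v \<longrightarrow> real (card (nbhd V E u \<inter> nbhd V E v)) = lam) \<and>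
     (\<forall>u\<in>V. \<forall>v\<in>V. u \<noteq> v \<and> \<not> E u v \<longrightarrow> real (card (nbhd V E u \<inter> nbhd V E v)) = mu)"

definition conference_graph :: "'a set \<Rightarrow> ('a \<Rightarrow> 'a \<Rightarrow> bool) \<Rightarrow> bool" where
  "conference_graph V E \<longleftrightarrow>
     (let n = real (card V) in strongly_regular V E n ((n - 1) / 2) ((n - 5) / 4) ((n - 1) / 4))"

end

theory Submission
  imports Defs
begin

text \<open>Contracting two distinct vertices \<open>u\<close>, \<open>v\<close> produces red edges exactly towards the
  vertices outside \<open>{u, v}\<close> adjacent to one of them but not the other, so \<open>lb\<^sub>1\<close> is the
  minimum of \<open>D(u, v) = |N(u) \<triangle> N(v) - {u, v}|\<close> over pairs of distinct vertices. Counting the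
  triples \<open>(u, v, w)\<close> with \<open>w\<close> distinguishing \<open>u\<close> from \<open>v\<close> in two ways, the sum of
  \<open>D(u, v)\<close> over the \<open>n (n - 1)\<close> ordered pairs equals \<open>\<Sum>\<^sub>w 2 d(w) (n - 1 - d(w))\<close>, which
  is at most \<open>n (n - 1)\<^sup>2 / 2\<close> by AM-GM; so the minimum is at most
  \<open>(n - 1) / 2\<close>. Equality forces every \<open>D(u, v)\<close> and every degree to be \<open>(n - 1) / 2\<close>; by
  \<open>D(u, v) + 2 |N(u) \<inter> N(v)| + 2 [uv \<in> E] = d(u) + d(v)\<close> this is precisely the
  conference-graph condition.\<close>

lemma simple_graphD:
  assumes "simple_graph V E"
  shows "finite V" and "E x y \<Longrightarrow> E y x" and "\<not> E x x"
  using assms unfolding simple_graph_def by blast+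

definition distinguishing :: "'a set \<Rightarrow> ('a \<Rightarrow> 'a \<Rightarrow> bool) \<Rightarrow> 'a \<Rightarrow> 'a \<Rightarrow> 'a set" where
  "distinguishing V E u v = {w \<in> V - {u, v}. E u w \<noteq> E v w}"

lemma red_degree_pair_partition_pair:
  "red_degree E (pair_partition V u v) {u, v} = card (distinguishing V E u v)"
proof -
  have "{W \<in> pair_partition V u v. red_edge E {u, v} W} = (\<lambda>w. {w}) ` distinguishing V E u v"
    unfolding pair_partition_def distinguishing_def red_edge_def by auto
  then show ?thesis
    unfolding red_degree_def by (simp add: card_image)
qed

lemma red_degree_pair_partition_singleton:
  assumes "simple_graph V E" and "w \<in> V - {u, v}"
  shows "red_degree E (pair_partition V u v) {w} = of_bool (w \<in> distinguishing V E u v)"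
proof -
  have "{W \<in> pair_partition V u v. red_edge E {w} W}
      = (if w \<in> distinguishing V E u v then {{u, v}} else {})"
    using assms simple_graphD(2)[OF assms(1)]
    unfolding pair_partition_def distinguishing_def red_edge_def by auto
  then show ?thesis
    unfolding red_degree_def by simp
qed

lemma max_red_degree_pair_partition:
  assumes "simple_graph V E"
  shows "max_red_degree E (pair_partition V u v) = card (distinguishing V E u v)"
proof -
  let ?P = "pair_partition V u v"
  have "finite (distinguishing V E u v)"
    using simple_graphD(1)[OF assms] unfolding distinguishing_def by simp
  then have singleton: "red_degree E ?P {w} \<le> card (distinguishing V E u v)"
    if "w \<in> V - {u, v}" for w
    using red_degree_pair_partition_singleton[OF assms that] card_mono[of _ "{w}"] by force
  have "red_degree E ?P W \<le> card (distinguishing V E u v)" if "W \<in> ?P" for W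
  proof -
    from that consider "W = {u, v}" | w where "w \<in> V - {u, v}" "W = {w}"
      unfolding pair_partition_def by blast
    then show ?thesis
      by cases (simp_all add: red_degree_pair_partition_pair singleton)
  qed
  moreover have "finite ?P" "{u, v} \<in> ?P"
    using simple_graphD(1)[OF assms] unfolding pair_partition_def by simp_all
  ultimately show ?thesis
    unfolding max_red_degree_def
    by (intro Max_eqI) (auto intro: rev_image_eqI simp: red_degree_pair_partition_pair)
qed

lemma lb1_eq_Min_card_distinguishing:
  assumes "simple_graph V E" and "card V \<noteq> 1"
  shows "lb1 V E = Min {card (distinguishing V E u v) | u v. u \<in> V \<and> v \<in> V \<and> u \<noteq> v}"
  using assms unfolding lb1_def by (simp add: max_red_degree_pair_partition)

lemma finite_card_distinguishing_values:
  assumes "finite V"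
  shows "finite {card (distinguishing V E u v) | u v. u \<in> V \<and> v \<in> V \<and> u \<noteq> v}"
  by (rule finite_subset[of _ "(\<lambda>(u, v). card (distinguishing V E u v)) ` (V \<times> V)"])
    (use assms in auto)

lemma lb1_le_card_distinguishing:
  assumes "simple_graph V E" and "u \<in> V" "v \<in> V" "u \<noteq> v"
  shows "lb1 V E \<le> card (distinguishing V E u v)"
proof -
  have "card V \<noteq> 1"
    using assms simple_graphD(1)[OF assms(1)] by (auto simp: card_1_singleton_iff)
  then show ?thesis
    using assms finite_card_distinguishing_values[OF simple_graphD(1)[OF assms(1)]]
    by (auto simp: lb1_eq_Min_card_distinguishing intro: Min_le)
qed

lemma lb1_attained:
  assumes "simple_graph V E" and "2 \<le> card V"
  obtains u v where "u \<in> V" "v \<in> V" "u \<noteq> v" "lb1 V E = card (distinguishing V E u v)"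
proof -
  let ?S = "{card (distinguishing V E u v) | u v. u \<in> V \<and> v \<in> V \<and> u \<noteq> v}"
  have "finite V"
    using simple_graphD(1)[OF assms(1)] .
  then have "?S \<noteq> {}"
    using assms(2) card_le_Suc0_iff_eq[of V] by auto
  then have "Min ?S \<in> ?S"
    using finite_card_distinguishing_values[OF \<open>finite V\<close>] by (rule Min_in[rotated])
  moreover have "lb1 V E = Min ?S"
    using assms by (simp add: lb1_eq_Min_card_distinguishing)
  ultimately show ?thesis
    using that by auto
qed

lemma card_distinguishing_add_card_common_nbhd:
  assumes "simple_graph V E" and "u \<in> V" "v \<in> V" "u \<noteq> v"
  shows "card (distinguishing V E u v) + 2 * card (nbhd V E u \<inter> nbhd V E v) + 2 * of_bool (E u v)
       = card (nbhd V E u) + card (nbhd V E v)"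
proof -
  note G = simple_graphD[OF assms(1)]
  let ?c = "\<lambda>A. \<Sum>w\<in>V. of_bool (w \<in> A) :: nat"
  have card_eq: "card A = ?c A" if "A \<subseteq> V" for A
    using G(1) that by (simp add: Int_absorb1)
  have nbhd_sub: "nbhd V E x \<subseteq> V" for x
    unfolding nbhd_def by blast
  have pointwise: "of_bool (w \<in> nbhd V E u) + of_bool (w \<in> nbhd V E v)
      = of_bool (w \<in> distinguishing V E u v) + 2 * of_bool (w \<in> nbhd V E u \<inter> nbhd V E v)
        + of_bool (E u v) * (of_bool (w \<in> {u}) + of_bool (w \<in> {v}) :: nat)" if "w \<in> V" for w
    using that assms(4) G(2,3) unfolding distinguishing_def nbhd_def by auto
  have "card (nbhd V E u) + card (nbhd V E v) = ?c (nbhd V E u) + ?c (nbhd V E v)"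
    by (simp only: card_eq nbhd_sub)
  also have "\<dots> = ?c (distinguishing V E u v) + 2 * ?c (nbhd V E u \<inter> nbhd V E v)
      + of_bool (E u v) * (?c {u} + ?c {v})"
    by (simp only: sum.distrib[symmetric] pointwise cong: sum.cong)
      (simp only: sum.distrib sum_distrib_left distrib_left)
  also have "\<dots> = card (distinguishing V E u v) + 2 * card (nbhd V E u \<inter> nbhd V E v)
      + of_bool (E u v) * (card {u} + card {v})"
  proof -
    have "distinguishing V E u v \<subseteq> V" "nbhd V E u \<inter> nbhd V E v \<subseteq> V" "{u} \<subseteq> V" "{v} \<subseteq> V"
      using assms(2,3) nbhd_sub unfolding distinguishing_def by auto
    then show ?thesis
      by (simp only: card_eq)
  qed
  finally show ?thesis
    by simp
qed

lemma distinguished_pairs_eq: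
  assumes "simple_graph V E" and "w \<in> V"
  shows "{(u, v) \<in> V \<times> V. w \<in> distinguishing V E u v}
       = nbhd V E w \<times> (V - insert w (nbhd V E w)) \<union> (V - insert w (nbhd V E w)) \<times> nbhd V E w"
  using assms simple_graphD[OF assms(1)] unfolding distinguishing_def nbhd_def by auto

lemma card_distinguished_pairs:
  assumes "simple_graph V E" and "w \<in> V"
  shows "card {(u, v) \<in> V \<times> V. w \<in> distinguishing V E u v}
       = 2 * card (nbhd V E w) * (card V - 1 - card (nbhd V E w))"
proof -
  let ?N = "nbhd V E w" and ?M = "V - insert w (nbhd V E w)"
  have "finite V"
    using simple_graphD(1)[OF assms(1)] .
  moreover have "w \<notin> ?N" "?N \<subseteq> V"
    using simple_graphD(3)[OF assms(1)] unfolding nbhd_def by auto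
  ultimately have "card ?M = card V - 1 - card ?N" and "finite ?N"
    using assms(2) by (auto simp: card_Diff_subset finite_subset)
  moreover have "(?N \<times> ?M) \<inter> (?M \<times> ?N) = {}"
    by blast
  ultimately show ?thesis
    unfolding distinguished_pairs_eq[OF assms] using \<open>finite V\<close>
    by (simp add: card_Un_disjoint card_cartesian_product)
qed

lemma sum_card_distinguishing:
  assumes "simple_graph V E"
  shows "(\<Sum>u\<in>V. \<Sum>v\<in>V. card (distinguishing V E u v))
       = (\<Sum>w\<in>V. 2 * card (nbhd V E w) * (card V - 1 - card (nbhd V E w)))"
proof -
  have "finite V"
    using simple_graphD(1)[OF assms] .
  have "distinguishing V E u v \<subseteq> V" for u v
    unfolding distinguishing_def by blast
  then have "(\<Sum>u\<in>V. \<Sum>v\<in>V. card (distinguishing V E u v))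
      = (\<Sum>(u, v)\<in>V \<times> V. \<Sum>w\<in>V. of_bool (w \<in> distinguishing V E u v))"
    using \<open>finite V\<close> by (simp add: sum.cartesian_product Int_absorb1)
  also have "\<dots> = (\<Sum>w\<in>V. \<Sum>(u, v)\<in>V \<times> V. of_bool (w \<in> distinguishing V E u v))"
    unfolding split_def by (rule sum.swap)
  also have "\<dots> = (\<Sum>w\<in>V. card {(u, v) \<in> V \<times> V. w \<in> distinguishing V E u v})"
    using \<open>finite V\<close> by (simp add: split_def Int_def mem_Times_iff)
  finally show ?thesis
    using card_distinguished_pairs[OF assms] by simp
qed

lemma card_nbhd_less:
  assumes "simple_graph V E" and "w \<in> V"
  shows "card (nbhd V E w) < card V"
proof (rule psubset_card_mono)
  show "finite V"
    using simple_graphD(1)[OF assms(1)] .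
  show "nbhd V E w \<subset> V"
    using assms simple_graphD(3)[OF assms(1)] unfolding nbhd_def by blast
qed

lemma sum_card_distinguishing_real:
  assumes "simple_graph V E" and "card V = n"
  shows "(\<Sum>u\<in>V. \<Sum>v\<in>V. real (card (distinguishing V E u v)))
       = (\<Sum>w\<in>V. 2 * (real (card (nbhd V E w)) * (real n - 1 - real (card (nbhd V E w)))))"
proof -
  have "real (card V - 1 - card (nbhd V E w)) = real n - 1 - real (card (nbhd V E w))"
    if "w \<in> V" for w
    using card_nbhd_less[OF assms(1) that] assms(2) by (simp add: of_nat_diff)
  then show ?thesis
    using arg_cong[OF sum_card_distinguishing[OF assms(1)], of real]
    by (simp add: of_nat_sum mult.assoc cong: sum.cong)
qed

lemma mult_diff_le_quarter_square:
  fixes x k :: "'a :: linordered_field"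
  shows "x * (k - x) \<le> k\<^sup>2 / 4"
proof -
  have "0 \<le> (k - 2 * x)\<^sup>2"
    by simp
  then show ?thesis
    by (simp add: power2_eq_square algebra_simps)
qed

lemma mult_diff_eq_quarter_square_iff:
  fixes x k :: "'a :: linordered_field"
  shows "x * (k - x) = k\<^sup>2 / 4 \<longleftrightarrow> x = k / 2"
proof -
  have "x * (k - x) = k\<^sup>2 / 4 - (k - 2 * x)\<^sup>2 / 4"
    by (simp add: power2_eq_square field_simps)
  then have "x * (k - x) = k\<^sup>2 / 4 \<longleftrightarrow> k - 2 * x = 0"
    by simp
  then show ?thesis
    by (auto simp: field_simps)
qed

lemma sum_sum_of_bool_neq_mult:
  fixes c :: real
  assumes "finite V"
  shows "(\<Sum>u\<in>V. \<Sum>v\<in>V. of_bool (u \<noteq> v) * c) = c * (real (card V) * (real (card V) - 1))"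
proof -
  have "(\<Sum>v\<in>V. of_bool (u \<noteq> v) * c) = c * (real (card V) - 1)" if "u \<in> V" for u
  proof -
    have "V \<inter> {v. u \<noteq> v} = V - {u}"
      by blast
    moreover have "0 < card V"
      using assms that card_gt_0_iff by blast
    ultimately show ?thesis
      using assms that by (simp add: card_Diff_singleton of_nat_diff Suc_le_eq)
  qed
  then have "(\<Sum>u\<in>V. \<Sum>v\<in>V. of_bool (u \<noteq> v) * c) = (\<Sum>u\<in>V. c * (real (card V) - 1))"
    by (rule sum.cong[OF refl])
  then show ?thesis
    by simp
qed

lemma lb1_mult_le_sum_card_distinguishing:
  assumes "simple_graph V E" and "card V = n"
  shows "real (lb1 V E) * (real n * (real n - 1))
       \<le> (\<Sum>u\<in>V. \<Sum>v\<in>V. real (card (distinguishing V E u v)))"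
proof -
  have "of_bool (u \<noteq> v) * real (lb1 V E) \<le> real (card (distinguishing V E u v))"
    if "u \<in> V" "v \<in> V" for u v
    using lb1_le_card_distinguishing[OF assms(1) that] by auto
  then have "(\<Sum>u\<in>V. \<Sum>v\<in>V. of_bool (u \<noteq> v) * real (lb1 V E))
      \<le> (\<Sum>u\<in>V. \<Sum>v\<in>V. real (card (distinguishing V E u v)))"
    by (intro sum_mono) auto
  then show ?thesis
    using sum_sum_of_bool_neq_mult[OF simple_graphD(1)[OF assms(1)]] assms(2) by simp
qed

lemma sum_card_distinguishing_le:
  assumes "simple_graph V E" and "card V = n"
  shows "(\<Sum>u\<in>V. \<Sum>v\<in>V. real (card (distinguishing V E u v))) \<le> real n * (real n - 1)\<^sup>2 / 2"
proof -
  have "(\<Sum>w\<in>V. 2 * (real (card (nbhd V E w)) * (real n - 1 - real (card (nbhd V E w)))))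
      \<le> (\<Sum>w\<in>V. 2 * ((real n - 1)\<^sup>2 / 4))"
    by (intro sum_mono mult_left_mono mult_diff_le_quarter_square) simp
  then show ?thesis
    using assms(2) by (simp add: sum_card_distinguishing_real[OF assms])
qed

lemma lb1_le_half:
  assumes "simple_graph V E" and "card V = n" and "2 \<le> n"
  shows "real (lb1 V E) \<le> (real n - 1) / 2"
proof -
  have "real (lb1 V E) * (real n * (real n - 1)) \<le> real n * (real n - 1)\<^sup>2 / 2"
    using lb1_mult_le_sum_card_distinguishing[OF assms(1,2)] sum_card_distinguishing_le[OF assms(1,2)]
    by (rule order_trans)
  also have "\<dots> = (real n - 1) / 2 * (real n * (real n - 1))"
    by (simp add: power2_eq_square)
  finally show ?thesis
    by (rule mult_right_le_imp_le) (use assms(3) in simp)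
qed

lemma lb1_eq_half_imp_uniform:
  assumes "simple_graph V E" and "card V = n" and "real (lb1 V E) = (real n - 1) / 2"
  shows "\<forall>w\<in>V. real (card (nbhd V E w)) = (real n - 1) / 2"
    and "\<forall>u\<in>V. \<forall>v\<in>V. u \<noteq> v \<longrightarrow> real (card (distinguishing V E u v)) = (real n - 1) / 2"
proof -
  let ?S = "\<Sum>u\<in>V. \<Sum>v\<in>V. real (card (distinguishing V E u v))"
  have "finite V"
    using simple_graphD(1)[OF assms(1)] .
  have lb1_pairs: "real (lb1 V E) * (real n * (real n - 1)) = real n * (real n - 1)\<^sup>2 / 2"
    by (simp add: assms(3) power2_eq_square)
  then have S_eq: "?S = real n * (real n - 1)\<^sup>2 / 2"
    using lb1_mult_le_sum_card_distinguishing[OF assms(1,2)] sum_card_distinguishing_le[OF assms(1,2)]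
    by linarith
  show "\<forall>w\<in>V. real (card (nbhd V E w)) = (real n - 1) / 2"
  proof
    fix w assume "w \<in> V"
    have le: "2 * (real (card (nbhd V E x)) * (real n - 1 - real (card (nbhd V E x))))
        \<le> 2 * ((real n - 1)\<^sup>2 / 4)" for x
      by (rule mult_left_mono[OF mult_diff_le_quarter_square]) simp
    have "(\<Sum>w\<in>V. 2 * (real (card (nbhd V E w)) * (real n - 1 - real (card (nbhd V E w)))))
        = (\<Sum>w\<in>V. 2 * ((real n - 1)\<^sup>2 / 4))"
      using S_eq assms(2) by (simp add: sum_card_distinguishing_real[OF assms(1,2), symmetric])
    then have "2 * (real (card (nbhd V E w)) * (real n - 1 - real (card (nbhd V E w))))
        = 2 * ((real n - 1)\<^sup>2 / 4)"
      by (rule sum_mono_inv[OF _ le \<open>w \<in> V\<close> \<open>finite V\<close>])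
    then show "real (card (nbhd V E w)) = (real n - 1) / 2"
      using mult_diff_eq_quarter_square_iff[of "real (card (nbhd V E w))" "real n - 1"] by simp
  qed
  show "\<forall>u\<in>V. \<forall>v\<in>V. u \<noteq> v \<longrightarrow> real (card (distinguishing V E u v)) = (real n - 1) / 2"
  proof (intro ballI impI)
    fix u v assume "u \<in> V" "v \<in> V" "u \<noteq> v"
    have le: "of_bool (x \<noteq> y) * real (lb1 V E) \<le> real (card (distinguishing V E x y))"
      if "x \<in> V" "y \<in> V" for x y
      using lb1_le_card_distinguishing[OF assms(1) that] by auto
    have "(\<Sum>x\<in>V. \<Sum>y\<in>V. of_bool (x \<noteq> y) * real (lb1 V E))
        = real (lb1 V E) * (real n * (real n - 1))"
      using sum_sum_of_bool_neq_mult[OF \<open>finite V\<close>] assms(2) by simp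
    also have "\<dots> = ?S"
      by (simp only: lb1_pairs S_eq)
    finally have "(\<Sum>y\<in>V. of_bool (u \<noteq> y) * real (lb1 V E))
        = (\<Sum>y\<in>V. real (card (distinguishing V E u y)))"
      by (rule sum_mono_inv[OF _ sum_mono[OF le] \<open>u \<in> V\<close> \<open>finite V\<close>])
    then have "of_bool (u \<noteq> v) * real (lb1 V E) = real (card (distinguishing V E u v))"
      by (rule sum_mono_inv[OF _ le[OF \<open>u \<in> V\<close>] \<open>v \<in> V\<close> \<open>finite V\<close>])
    then show "real (card (distinguishing V E u v)) = (real n - 1) / 2"
      using assms(3) \<open>u \<noteq> v\<close> by simp
  qed
qed

lemma conference_graph_iff_uniform:
  assumes "simple_graph V E"
  shows "conference_graph V E \<longleftrightarrow>
    (\<forall>w\<in>V. real (card (nbhd V E w)) = (real (card V) - 1) / 2) \<and>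
    (\<forall>u\<in>V. \<forall>v\<in>V. u \<noteq> v \<longrightarrow> real (card (distinguishing V E u v)) = (real (card V) - 1) / 2)"
    (is "_ \<longleftrightarrow> ?regular \<and> ?uniform")
proof -
  have count: "real (card (distinguishing V E u v)) + 2 * real (card (nbhd V E u \<inter> nbhd V E v))
      + 2 * of_bool (E u v) = real (card (nbhd V E u)) + real (card (nbhd V E v))"
    if "u \<in> V" "v \<in> V" "u \<noteq> v" for u v
    using arg_cong[OF card_distinguishing_add_card_common_nbhd[OF assms that], of real] by simp
  show ?thesis
  proof
    assume "conference_graph V E"
    then have regular: ?regular
      and adjacent: "\<And>u v. u \<in> V \<Longrightarrow> v \<in> V \<Longrightarrow> u \<noteq> v \<Longrightarrow> E u v \<Longrightarrow>
        real (card (nbhd V E u \<inter> nbhd V E v)) = (real (card V) - 5) / 4"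
      and nonadjacent: "\<And>u v. u \<in> V \<Longrightarrow> v \<in> V \<Longrightarrow> u \<noteq> v \<Longrightarrow> \<not> E u v \<Longrightarrow>
        real (card (nbhd V E u \<inter> nbhd V E v)) = (real (card V) - 1) / 4"
      unfolding conference_graph_def strongly_regular_def Let_def by blast+
    have ?uniform
    proof (intro ballI impI)
      fix u v assume uv: "u \<in> V" "v \<in> V" "u \<noteq> v"
      show "real (card (distinguishing V E u v)) = (real (card V) - 1) / 2"
        using count[OF uv] regular uv adjacent[OF uv] nonadjacent[OF uv]
        by (cases "E u v") (auto simp: field_simps)
    qed
    with regular show "?regular \<and> ?uniform" ..
  next
    assume "?regular \<and> ?uniform"
    then have regular: ?regular and uniform: ?uniform
      by blast+
    have "real (card (nbhd V E u \<inter> nbhd V E v))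
        = (if E u v then (real (card V) - 5) / 4 else (real (card V) - 1) / 4)"
      if uv: "u \<in> V" "v \<in> V" "u \<noteq> v" for u v
      using count[OF uv] regular uniform uv by (cases "E u v") (auto simp: field_simps)
    with regular show "conference_graph V E"
      unfolding conference_graph_def strongly_regular_def Let_def by auto
  qed
qed

theorem mainTheorem5:
  fixes V :: "'a set" and E :: "'a \<Rightarrow> 'a \<Rightarrow> bool" and n :: nat
  assumes "simple_graph V E" and "V \<noteq> {}" and "card V = n"
  shows "real (lb1 V E) \<le> (real n - 1) / 2 \<and>
         (real (lb1 V E) = (real n - 1) / 2 \<longleftrightarrow> conference_graph V E)"
proof (cases "n = 1")
  case True
  then obtain x where "V = {x}"
    using assms(3) card_1_singletonE by metis
  then show ?thesis
    using True assms simple_graphD(3)[OF assms(1)]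
    by (simp add: lb1_def conference_graph_iff_uniform nbhd_def)
next
  case False
  then have "2 \<le> n"
    using assms(2,3) simple_graphD(1)[OF assms(1)] by (cases n) auto
  have "real (lb1 V E) = (real n - 1) / 2 \<longleftrightarrow> conference_graph V E"
  proof
    assume "real (lb1 V E) = (real n - 1) / 2"
    then show "conference_graph V E"
      using lb1_eq_half_imp_uniform[OF assms(1,3)] conference_graph_iff_uniform[OF assms(1)] assms(3)
      by simp
  next
    assume "conference_graph V E"
    moreover obtain u v where "u \<in> V" "v \<in> V" "u \<noteq> v" "lb1 V E = card (distinguishing V E u v)"
      using lb1_attained[OF assms(1)] \<open>2 \<le> n\<close> assms(3) by metis
    ultimately show "real (lb1 V E) = (real n - 1) / 2"
      using conference_graph_iff_uniform[OF assms(1)] assms(3) by simp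
  qed
  with lb1_le_half[OF assms(1,3) \<open>2 \<le> n\<close>] show ?thesis
    by simp
qed

end
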